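(* Let $p$ be an odd prime, $n\ge1$, $G=\mu_{p^n}$ and let $\mathcal{P}$ be a unital partition of $G$ satisfying condition (p). Let $0\le k\le n-1$, fix $A\in\mathcal{P}_k$ and a generator $x$ of $G$ with $y:=x^{p^k}\in A$, and let $b_k$ be the integer with $u_k=\phi(p^{b_k})$. Then for every integer $i$, $$A_{i,k}=\{x^{p^k(\alpha^i+sp^{b_k})}\mid s=0,1,\dots,p^{n-k-b_k}-1\}.$$
   Context: A unital partition of a finite commutative group $G$ is a partition $G=\{1\}\sqcup A_0\sqcup\dots\sqcup A_s$ such that, with $a_i=\sum_{x\in A_i}x\in\mathbb{Z}[G]$, the $\mathbb{Z}$-span of $1$ and the $a_i$ is closed under multiplication in $\mathbb{Z}[G]$. Condition (p): $|B|$ is a power of $p$ for every $B\in\mathcal{P}$. $B_k=\{x^{p^k}\mid x\text{ a generator of }G\}$, $\mathcal{P}_k=\{B\in\mathcal{P}\mid B\cap B_k\neq\emptyset\}$. Fix an integer $\alpha$ generating $(\mathbb{Z}/p^n\mathbb{Z})^\times$; $u_k$ is the smallest positive integer with $y^{\alpha^{u_k}}\in A$; under (p) one has $u_k=\phi(p^{b_k})$ with $1\le b_k\le n-k$. For $X\subseteq G$, $X^m=\{z^m:z\in X\}$, and $A_{i,k}:=A^{\alpha^i}$. *)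

theory Defs
  imports "HOL-Number_Theory.Number_Theory"
begin

text \<open>Model: G = mu_N (N = p^n) is identified with Z/NZ via a fixed primitive N-th root
  zeta: the element zeta^j is represented by j in {0..<N}. Multiplication in G becomes
  addition mod N, and z^m becomes (m*z) mod N.  Elements of Z[G] are functions
  nat => int (coefficients), supported on {0..<N}.\<close>

definition grp :: "nat \<Rightarrow> nat set" where
  "grp N = {0..<N}"

definition gconv :: "nat \<Rightarrow> (nat \<Rightarrow> int) \<Rightarrow> (nat \<Rightarrow> int) \<Rightarrow> nat \<Rightarrow> int" where
  "gconv N f g z = (if z < N then (\<Sum>a<N. f a * g ((z + N - a) mod N)) else 0)"

text \<open>Z-span of the block sums a_B = sum_{x in B} x (the block {1} gives the unit 1).\<close>
definition zspan :: "nat set set \<Rightarrow> (nat \<Rightarrow> int) set" where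
  "zspan P = {f. \<exists>c :: nat set \<Rightarrow> int. f = (\<lambda>z. \<Sum>B\<in>P. (if z \<in> B then c B else 0))}"

definition unital_partition :: "nat \<Rightarrow> nat set set \<Rightarrow> bool" where
  "unital_partition N P \<longleftrightarrow>
     (\<forall>B\<in>P. B \<noteq> {} \<and> B \<subseteq> grp N) \<and>
     (\<forall>B\<in>P. \<forall>C\<in>P. B \<noteq> C \<longrightarrow> B \<inter> C = {}) \<and>
     \<Union>P = grp N \<and>
     {0} \<in> P \<and>
     (\<forall>f\<in>zspan P. \<forall>g\<in>zspan P. gconv N f g \<in> zspan P)"

definition cond_p :: "nat \<Rightarrow> nat set set \<Rightarrow> bool" where
  "cond_p p P \<longleftrightarrow> (\<forall>B\<in>P. \<exists>e. card B = p ^ e)"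

definition gens :: "nat \<Rightarrow> nat set" where
  "gens N = {x \<in> grp N. coprime x N}"

definition setpow :: "nat \<Rightarrow> nat set \<Rightarrow> nat \<Rightarrow> nat set" where
  "setpow N X m = (\<lambda>z. (m * z) mod N) ` X"

definition Bk :: "nat \<Rightarrow> nat \<Rightarrow> nat \<Rightarrow> nat set" where
  "Bk p n k = setpow (p ^ n) (gens (p ^ n)) (p ^ k)"

definition Pk :: "nat \<Rightarrow> nat \<Rightarrow> nat set set \<Rightarrow> nat \<Rightarrow> nat set set" where
  "Pk p n P k = {B \<in> P. B \<inter> Bk p n k \<noteq> {}}"

text \<open>The residue of a^i modulo N for an integer exponent i (a a unit mod N);
  negative exponents are realised via a^(totient N) = 1 mod N.\<close>
definition upow :: "nat \<Rightarrow> int \<Rightarrow> int \<Rightarrow> nat" where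
  "upow N a i = nat ((a mod int N) ^ nat (i mod int (totient N)) mod int N)"

definition uk :: "nat \<Rightarrow> int \<Rightarrow> nat \<Rightarrow> nat set \<Rightarrow> nat" where
  "uk N \<alpha> y A = (LEAST u::nat. u > 0 \<and> (upow N \<alpha> (int u) * y) mod N \<in> A)"

end

theory Submission
  imports Defs "HOL-Computational_Algebra.Polynomial" "HOL-Library.Indicator_Function"
begin

(*
  G = mu_N is modelled as Z/N, so z^m is (m * z) mod N and a block A has block sum a_A.
  1. Multiplier theorem (any N): reduction modulo X^N - 1 is a ring homomorphism from Z[X]
     onto the group ring, and the Frobenius congruence a_A^q = a_{A^q} (mod q) for primes
     q not dividing N makes A^q a union of blocks; composing primes, A^m is a block for
     every unit m, so a unit mapping one element of A into A stabilises A.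
  2. For N = p^n under condition (p), counting the stabiliser through the fibres of m |-> m z
     shows that all elements of a block have one valuation, so A consists of unit multiples
     of any of its elements.
  3. In the locale level_block (the hypotheses of the theorem), u_k is the index of the
     stabiliser in the cyclic unit group generated by alpha; as u_k = phi(p^b), the
     stabiliser is the group of units = 1 mod p^b, and 1 <= b <= n - k.  Hence
     A = {m y : m = 1 mod p^b}, and an explicit computation with such units gives A^(alpha^i).
*)

section \<open>Unital partitions of Z/N\<close>

lemma unital_partition_block:
  assumes "unital_partition N P" and "B \<in> P"
  shows "B \<noteq> {}" and "B \<subseteq> {0..<N}"
  using assms unfolding unital_partition_def grp_def by blast+

lemma unital_partition_unique_block:
  "unital_partition N P \<Longrightarrow> B \<in> P \<Longrightarrow> C \<in> P \<Longrightarrow> z \<in> B \<Longrightarrow> z \<in> C \<Longrightarrow> B = C"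
  unfolding unital_partition_def by blast

lemma unital_partition_cover: "unital_partition N P \<Longrightarrow> z < N \<Longrightarrow> \<exists>B\<in>P. z \<in> B"
  unfolding unital_partition_def grp_def by (metis UnionE atLeast0LessThan lessThan_iff)

lemma unital_partition_finite: "unital_partition N P \<Longrightarrow> finite P"
  by (rule finite_subset[of _ "Pow {0..<N}"]) (auto dest: unital_partition_block(2))

lemma unital_partition_zero_notin:
  assumes u: "unital_partition N P" and A: "A \<in> P" and y: "y \<in> A" "y \<noteq> 0"
  shows "0 \<notin> A"
proof
  assume "0 \<in> A"
  moreover have "{0} \<in> P" using u unfolding unital_partition_def by blast
  ultimately have "A = {0}" using unital_partition_unique_block[OF u A] by blast
  thus False using y by simp
qed

lemma zspan_constant_on_block:
  assumes u: "unital_partition N P" and f: "f \<in> zspan P" and C: "C \<in> P"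
    and z: "z \<in> C" and w: "w \<in> C"
  shows "f z = f w"
proof -
  obtain c where fc: "f = (\<lambda>z. \<Sum>B\<in>P. (if z \<in> B then c B else 0))"
    using f unfolding zspan_def by blast
  have "f t = c C" if t: "t \<in> C" for t
  proof -
    have "f t = (\<Sum>B\<in>P. (if B = C then c B else 0))"
      unfolding fc
    proof (rule sum.cong)
      fix B assume "B \<in> P"
      hence "t \<in> B \<longleftrightarrow> B = C" using unital_partition_unique_block[OF u _ C _ t] t by blast
      thus "(if t \<in> B then c B else 0) = (if B = C then c B else 0)" by simp
    qed simp
    also have "\<dots> = c C" using C unital_partition_finite[OF u] by simp
    finally show ?thesis .
  qed
  thus ?thesis using z w by simp
qed

lemma indicator_in_zspan:
  assumes u: "unital_partition N P" and C: "C \<in> P"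
  shows "(indicator C :: nat \<Rightarrow> int) \<in> zspan P"
proof -
  have "indicator C = (\<lambda>z. \<Sum>B\<in>P. (if z \<in> B then (if B = C then 1 else 0) else 0 :: int))"
  proof
    fix z
    have "(\<Sum>B\<in>P. (if z \<in> B then (if B = C then 1 else 0) else 0 :: int))
        = (\<Sum>B\<in>P. (if B = C then indicator C z else 0))"
      by (rule sum.cong) (auto simp: indicator_def)
    also have "\<dots> = indicator C z" using C unital_partition_finite[OF u] by simp
    finally show "indicator C z = (\<Sum>B\<in>P. (if z \<in> B then (if B = C then 1 else 0) else 0 :: int))"
      by simp
  qed
  thus ?thesis unfolding zspan_def by (intro CollectI exI)
qed

section \<open>The group ring as a quotient of Z[X]\<close>

text \<open>The coefficient function in Z[Z/N] of the image of an integer polynomial Q under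
  X |-> (generator of Z/N), i.e. Q reduced modulo X^N - 1.\<close>
definition cyc_reduce :: "nat \<Rightarrow> int poly \<Rightarrow> nat \<Rightarrow> int" where
  "cyc_reduce N Q z = (if z < N then (\<Sum>j<Suc (degree Q). if j mod N = z then coeff Q j else 0) else 0)"

lemma cyc_reduce_bound:
  assumes "degree Q < K"
  shows "cyc_reduce N Q z = (if z < N then (\<Sum>j<K. if j mod N = z then coeff Q j else 0) else 0)"
proof -
  have "(\<Sum>j<Suc (degree Q). if j mod N = z then coeff Q j else 0)
      = (\<Sum>j<K. if j mod N = z then coeff Q j else 0)"
    by (rule sum.mono_neutral_left) (use assms in \<open>auto simp: coeff_eq_0\<close>)
  thus ?thesis by (simp add: cyc_reduce_def)
qed

lemma cyc_reduce_add: "cyc_reduce N (Q + R) z = cyc_reduce N Q z + cyc_reduce N R z"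
proof -
  define K where "K = Suc (max (degree Q) (degree R))"
  have "degree (Q + R) < K" "degree Q < K" "degree R < K"
    unfolding K_def using degree_add_le_max[of Q R] by auto
  thus ?thesis by (auto simp: cyc_reduce_bound[where K = K] sum.distrib[symmetric] intro!: sum.cong)
qed

lemma cyc_reduce_smult: "cyc_reduce N (smult c Q) z = c * cyc_reduce N Q z"
proof -
  have d: "degree (smult c Q) < Suc (degree Q)" by (rule le_imp_less_Suc[OF degree_smult_le])
  have "(\<Sum>j<Suc (degree Q). if j mod N = z then coeff (smult c Q) j else 0)
      = (\<Sum>j<Suc (degree Q). c * (if j mod N = z then coeff Q j else 0))"
    by (rule sum.cong) auto
  also have "\<dots> = c * (\<Sum>j<Suc (degree Q). if j mod N = z then coeff Q j else 0)"
    by (rule sum_distrib_left[symmetric])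
  finally have "(\<Sum>j<Suc (degree Q). if j mod N = z then coeff (smult c Q) j else 0)
      = c * (\<Sum>j<Suc (degree Q). if j mod N = z then coeff Q j else 0)" .
  thus ?thesis unfolding cyc_reduce_bound[OF d] by (simp add: cyc_reduce_def)
qed

lemma cyc_reduce_sum: "finite I \<Longrightarrow> cyc_reduce N (\<Sum>i\<in>I. Q i) z = (\<Sum>i\<in>I. cyc_reduce N (Q i) z)"
proof (induction I rule: finite_induct)
  case empty
  then show ?case by (simp add: cyc_reduce_def)
qed (simp add: cyc_reduce_add)

lemma cyc_reduce_monom: "N > 0 \<Longrightarrow> cyc_reduce N (monom c j) z = (if z = j mod N then c else 0)"
proof -
  assume N: "N > 0"
  have d: "degree (monom c j) < Suc j" by (simp add: degree_monom_le le_imp_less_Suc)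
  have "(\<Sum>i<Suc j. if i mod N = z then coeff (monom c j) i else 0)
      = (\<Sum>i<Suc j. if j = i then (if j mod N = z then c else 0) else 0)"
    by (rule sum.cong) (auto simp: coeff_monom)
  also have "\<dots> = (if j mod N = z then c else 0)" by (simp add: sum.delta)
  finally show ?thesis using N by (auto simp: cyc_reduce_bound[OF d])
qed

lemma cyc_reduce_as_sum:
  "N > 0 \<Longrightarrow> cyc_reduce N Q = (\<lambda>z. \<Sum>i\<le>degree Q. (if z = i mod N then coeff Q i else 0))"
proof
  fix z assume N: "N > 0"
  have "cyc_reduce N Q z = cyc_reduce N (\<Sum>i\<le>degree Q. monom (coeff Q i) i) z"
    by (simp only: poly_as_sum_of_monoms)
  also have "\<dots> = (\<Sum>i\<le>degree Q. (if z = i mod N then coeff Q i else 0))"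
    using N by (simp add: cyc_reduce_sum cyc_reduce_monom)
  finally show "cyc_reduce N Q z = (\<Sum>i\<le>degree Q. (if z = i mod N then coeff Q i else 0))" .
qed

lemma gconv_sum_left:
  "finite I \<Longrightarrow> gconv N (\<lambda>z. \<Sum>i\<in>I. F i z) g = (\<lambda>z. \<Sum>i\<in>I. gconv N (F i) g z)"
  by (rule ext) (simp add: gconv_def sum_distrib_right sum.swap[of _ I])

lemma gconv_sum_right:
  "finite I \<Longrightarrow> gconv N f (\<lambda>z. \<Sum>i\<in>I. G i z) = (\<lambda>z. \<Sum>i\<in>I. gconv N f (G i) z)"
  by (rule ext) (simp add: gconv_def sum_distrib_left sum.swap[of _ I])

text \<open>Subtraction in Z/N, realised as z + N - i: z - i = j iff z = i + j.\<close>
lemma sub_mod_eq_iff: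
  fixes N z i j :: nat
  assumes "z < N"
  shows "(z + N - i mod N) mod N = j mod N \<longleftrightarrow> z = (i + j) mod N"
proof -
  have "i mod N < N" using assms by simp
  have "(z + N - i mod N) mod N = j mod N \<longleftrightarrow> [z + N - i mod N = j] (mod N)"
    by (simp add: cong_def)
  also have "\<dots> \<longleftrightarrow> [z + N - i mod N + i mod N = j + i mod N] (mod N)"
    by (rule cong_add_rcancel_nat[symmetric])
  also have "z + N - i mod N + i mod N = z + N" using \<open>i mod N < N\<close> by simp
  also have "[z + N = j + i mod N] (mod N) \<longleftrightarrow> [z = i + j] (mod N)"
    by (simp add: cong_def mod_add_right_eq add.commute)
  also have "\<dots> \<longleftrightarrow> z = (i + j) mod N" using assms by (simp add: cong_def)
  finally show ?thesis .
qed

lemma gconv_point_masses: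
  assumes N: "N > 0"
  shows "gconv N (\<lambda>z. if z = i mod N then c else 0) (\<lambda>z. if z = j mod N then d else 0) z
     = (if z = (i + j) mod N then c * d else 0)"
proof (cases "z < N")
  case True
  have "(\<Sum>a<N. (if a = i mod N then c else 0) * (if (z + N - a) mod N = j mod N then d else 0))
      = (\<Sum>a<N. if a = i mod N then (if (z + N - i mod N) mod N = j mod N then c * d else 0) else 0)"
    by (rule sum.cong) auto
  also have "\<dots> = (if (z + N - i mod N) mod N = j mod N then c * d else 0)"
    using N by (simp add: sum.delta')
  finally show ?thesis using True by (simp add: gconv_def sub_mod_eq_iff)
qed (use N in \<open>auto simp: gconv_def\<close>)

lemma cyc_reduce_mult:
  assumes N: "N > 0"
  shows "cyc_reduce N (Q * R) = gconv N (cyc_reduce N Q) (cyc_reduce N R)"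
proof
  fix z
  have "Q * R = (\<Sum>i\<le>degree Q. monom (coeff Q i) i) * (\<Sum>j\<le>degree R. monom (coeff R j) j)"
    by (simp only: poly_as_sum_of_monoms)
  also have "\<dots> = (\<Sum>i\<le>degree Q. \<Sum>j\<le>degree R. monom (coeff Q i * coeff R j) (i + j))"
    by (simp add: sum_product mult_monom)
  finally have QR: "Q * R = (\<Sum>i\<le>degree Q. \<Sum>j\<le>degree R. monom (coeff Q i * coeff R j) (i + j))" .
  have "cyc_reduce N (Q * R) z
      = (\<Sum>i\<le>degree Q. \<Sum>j\<le>degree R. (if z = (i + j) mod N then coeff Q i * coeff R j else 0))"
    unfolding QR using N by (simp add: cyc_reduce_sum cyc_reduce_monom)
  also have "\<dots> = (\<Sum>i\<le>degree Q. \<Sum>j\<le>degree R. gconv N (\<lambda>z. if z = i mod N then coeff Q i else 0)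
                    (\<lambda>z. if z = j mod N then coeff R j else 0) z)"
    using N by (simp add: gconv_point_masses)
  also have "\<dots> = gconv N (cyc_reduce N Q) (cyc_reduce N R) z"
    unfolding cyc_reduce_as_sum[OF N, of Q] cyc_reduce_as_sum[OF N, of R]
    by (simp add: gconv_sum_left gconv_sum_right)
  finally show "cyc_reduce N (Q * R) z = gconv N (cyc_reduce N Q) (cyc_reduce N R) z" .
qed

lemma inj_on_mult_mod: "coprime (q::nat) N \<Longrightarrow> inj_on (\<lambda>a. (q * a) mod N) {0..<N}"
proof (rule inj_onI)
  fix a b assume c: "coprime q N" and ab: "a \<in> {0..<N}" "b \<in> {0..<N}"
    and "(q * a) mod N = (q * b) mod N"
  hence "[a = b] (mod N)" using cong_mult_lcancel_nat[OF c] by (simp add: cong_def)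
  thus "a = b" using ab by (simp add: cong_less_modulus_unique_nat)
qed

lemma cyc_reduce_block_sum:
  assumes N: "N > 0" and A: "A \<subseteq> {0..<N}" and c: "coprime q N"
  shows "cyc_reduce N (\<Sum>a\<in>A. monom 1 (q * a)) = indicator (setpow N A q)"
proof
  fix z
  have fA: "finite A" using A finite_subset by blast
  have inj: "inj_on (\<lambda>a. (q * a) mod N) A" using inj_on_mult_mod[OF c] A inj_on_subset by blast
  have "cyc_reduce N (\<Sum>a\<in>A. monom 1 (q * a)) z = (\<Sum>a\<in>A. if z = (q * a) mod N then 1 else 0)"
    using fA N by (simp add: cyc_reduce_sum cyc_reduce_monom)
  also have "\<dots> = (\<Sum>w\<in>(\<lambda>a. (q * a) mod N) ` A. if z = w then 1 else 0)"
    by (simp add: sum.reindex[OF inj] o_def)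
  also have "\<dots> = indicator (setpow N A q) z" using fA by (simp add: indicator_def setpow_def)
  finally show "cyc_reduce N (\<Sum>a\<in>A. monom 1 (q * a)) z = indicator (setpow N A q) z" .
qed

lemma cyc_reduce_block_power:
  assumes u: "unital_partition N P" and N: "N > 0" and A: "A \<in> P"
  shows "cyc_reduce N ((\<Sum>a\<in>A. monom 1 a) ^ Suc j) \<in> zspan P"
proof -
  have As: "A \<subseteq> {0..<N}" by (rule unital_partition_block(2)[OF u A])
  hence "setpow N A 1 = A" unfolding setpow_def by force
  hence "cyc_reduce N (\<Sum>a\<in>A. monom 1 a) = indicator A"
    using cyc_reduce_block_sum[OF N As, of 1] by simp
  hence base: "cyc_reduce N (\<Sum>a\<in>A. monom 1 a) \<in> zspan P"
    using indicator_in_zspan[OF u A] by simp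
  show ?thesis
  proof (induction j)
    case (Suc j)
    have "cyc_reduce N ((\<Sum>a\<in>A. monom 1 a) ^ Suc (Suc j))
        = gconv N (cyc_reduce N (\<Sum>a\<in>A. monom 1 a)) (cyc_reduce N ((\<Sum>a\<in>A. monom 1 a) ^ Suc j))"
      by (simp only: power_Suc[of _ "Suc j"] cyc_reduce_mult[OF N])
    thus ?case using Suc base u unfolding unital_partition_def by simp
  qed (use base in simp)
qed

section \<open>The multiplier theorem\<close>

lemma frobenius_sum_monoms:
  fixes q :: nat and A :: "nat set"
  assumes q: "prime q" and A: "finite A"
  shows "(of_nat q :: int poly) dvd ((\<Sum>a\<in>A. monom 1 a) ^ q - (\<Sum>a\<in>A. monom 1 (q * a)))"
  using A
proof (induction A rule: finite_induct)
  case empty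
  then show ?case using q by (simp add: prime_gt_0_nat power_0_left)
next
  case (insert a F)
  define m :: "int poly" where "m = monom 1 a"
  define S where "S = (\<Sum>a\<in>F. monom (1::int) a)"
  define T where "T = (\<Sum>a\<in>F. monom (1::int) (q * a))"
  have q0: "q > 0" using q by (simp add: prime_gt_0_nat)
  have mq: "m ^ q = monom 1 (q * a)" unfolding m_def by (simp add: monom_power mult.commute)
  have "(m + S) ^ q = (\<Sum>k\<le>q. of_nat (q choose k) * m ^ k * S ^ (q - k))"
    by (rule binomial_ring)
  also have "\<dots> = (\<Sum>k\<in>{0, q}. of_nat (q choose k) * m ^ k * S ^ (q - k))
      + (\<Sum>k\<in>{..q} - {0, q}. of_nat (q choose k) * m ^ k * S ^ (q - k))"
    using sum.subset_diff[of "{0,q}" "{..q}" "\<lambda>k. of_nat (q choose k) * m ^ k * S ^ (q - k)"]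
    by (simp add: add.commute)
  also have "(\<Sum>k\<in>{0, q}. of_nat (q choose k) * m ^ k * S ^ (q - k)) = S ^ q + m ^ q"
    using q0 by simp
  finally have binom: "(m + S) ^ q = S ^ q + m ^ q
      + (\<Sum>k\<in>{..q} - {0, q}. of_nat (q choose k) * m ^ k * S ^ (q - k))" .
  have mixed: "(of_nat q :: int poly) dvd (\<Sum>k\<in>{..q} - {0, q}. of_nat (q choose k) * m ^ k * S ^ (q - k))"
  proof (rule dvd_sum)
    fix k assume "k \<in> {..q} - {0, q}"
    hence k: "0 < k" "k < q" by auto
    have "q dvd (q choose k)" by (rule dvd_choose_prime) (use k q in auto)
    then obtain r where "q choose k = q * r" by (elim dvdE)
    hence "of_nat (q choose k) * m ^ k * S ^ (q - k) = (of_nat q :: int poly) * (of_nat r * m ^ k * S ^ (q - k))"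
      by (simp add: mult.assoc)
    thus "(of_nat q :: int poly) dvd of_nat (q choose k) * m ^ k * S ^ (q - k)" by (rule dvdI)
  qed
  have IH: "(of_nat q :: int poly) dvd (S ^ q - T)" using insert.IH unfolding S_def T_def .
  have "(\<Sum>a\<in>insert a F. monom (1::int) a) ^ q - (\<Sum>a\<in>insert a F. monom 1 (q * a))
       = (m + S) ^ q - (monom 1 (q * a) + T)"
    using insert.hyps unfolding m_def S_def T_def by simp
  also have "\<dots> = (S ^ q - T) + (\<Sum>k\<in>{..q} - {0, q}. of_nat (q choose k) * m ^ k * S ^ (q - k))"
    unfolding binom mq by simp
  finally show ?case using IH mixed by simp
qed

text \<open>The reduction of (a_A)^q lies in the span,
  hence is constant on C, while modulo q it agrees with the indicator of A^q.\<close>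
lemma prime_multiple_saturated:
  assumes u: "unital_partition N P" and N: "N > 0" and A: "A \<in> P" and q: "prime q"
    and c: "coprime q N" and C: "C \<in> P" and z: "z \<in> C" "z \<in> setpow N A q" and w: "w \<in> C"
  shows "w \<in> setpow N A q"
proof (rule ccontr)
  assume wA: "w \<notin> setpow N A q"
  have As: "A \<subseteq> {0..<N}" by (rule unital_partition_block(2)[OF u A])
  have fA: "finite A" using As finite_subset by blast
  let ?F = "(\<Sum>a\<in>A. monom (1::int) a)"
  obtain H where H: "?F ^ q - (\<Sum>a\<in>A. monom 1 (q * a)) = of_nat q * H"
    using frobenius_sum_monoms[OF q fA] by (elim dvdE)
  have Fq: "?F ^ q = (\<Sum>a\<in>A. monom 1 (q * a)) + smult (of_nat q) H"
    using H by (simp add: algebra_simps of_nat_poly)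
  have "q = Suc (q - 1)" using q by (simp add: prime_gt_0_nat)
  hence "cyc_reduce N (?F ^ q) \<in> zspan P"
    using cyc_reduce_block_power[OF u N A, of "q - 1"] by simp
  hence "cyc_reduce N (?F ^ q) z = cyc_reduce N (?F ^ q) w"
    by (rule zspan_constant_on_block[OF u _ C z(1) w])
  hence "indicator (setpow N A q) z + of_nat q * cyc_reduce N H z
       = indicator (setpow N A q) w + of_nat q * cyc_reduce N H w"
    unfolding Fq cyc_reduce_add cyc_reduce_smult cyc_reduce_block_sum[OF N As c] .
  hence "1 + int q * cyc_reduce N H z = int q * cyc_reduce N H w"
    using z(2) wA by (simp add: indicator_def)
  hence "int q dvd 1" by (metis add_diff_cancel_right' dvd_triv_left dvd_diff right_diff_distrib')
  thus False using q by simp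
qed

definition saturates :: "nat \<Rightarrow> nat set set \<Rightarrow> nat \<Rightarrow> bool" where
  "saturates N P m \<longleftrightarrow> (\<forall>B\<in>P. \<forall>C\<in>P. C \<inter> setpow N B m \<noteq> {} \<longrightarrow> C \<subseteq> setpow N B m)"

lemma setpow_setpow: "setpow N (setpow N B m1) m2 = setpow N B (m1 * m2)"
  unfolding setpow_def image_image
  by (rule image_cong) (auto simp: mod_mult_right_eq mult.commute mult.left_commute)

lemma setpow_cong_one:
  assumes "B \<subseteq> {0..<N}" and "[c = 1] (mod N)"
  shows "setpow N B c = B"
proof -
  have "(c * z) mod N = z" if "z \<in> B" for z
    using cong_scalar_right[OF assms(2), of z] that assms(1) by (auto simp: cong_def)
  thus ?thesis unfolding setpow_def by simp
qed

lemma setpow_mono: "B \<subseteq> C \<Longrightarrow> setpow N B m \<subseteq> setpow N C m"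
  unfolding setpow_def by auto

lemma saturates_mult:
  assumes u: "unital_partition N P" and N: "N > 0"
    and m1: "saturates N P m1" and m2: "saturates N P m2"
  shows "saturates N P (m1 * m2)"
  unfolding saturates_def
proof (intro ballI impI)
  fix B C assume B: "B \<in> P" and C: "C \<in> P" and "C \<inter> setpow N B (m1 * m2) \<noteq> {}"
  then obtain v where v: "v \<in> setpow N B m1" and z: "(m2 * v) mod N \<in> C"
    unfolding setpow_setpow[symmetric] by (auto simp: setpow_def)
  have "v < N" using v N by (auto simp: setpow_def)
  then obtain D where D: "D \<in> P" "v \<in> D" using unital_partition_cover[OF u] by blast
  have DB: "D \<subseteq> setpow N B m1" using m1 B D v unfolding saturates_def by blast
  have "(m2 * v) mod N \<in> setpow N D m2" using D(2) by (auto simp: setpow_def)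
  hence "C \<subseteq> setpow N D m2" using m2 D(1) C z unfolding saturates_def by blast
  also have "\<dots> \<subseteq> setpow N (setpow N B m1) m2" by (rule setpow_mono[OF DB])
  also have "\<dots> = setpow N B (m1 * m2)" by (rule setpow_setpow)
  finally show "C \<subseteq> setpow N B (m1 * m2)" .
qed

text \<open>Every positive unit saturates P, by factoring it into primes not dividing N.\<close>
lemma unit_saturates:
  assumes u: "unital_partition N P" and N: "N > 0"
  shows "m > 0 \<Longrightarrow> coprime m N \<Longrightarrow> saturates N P m"
proof (induction m rule: less_induct)
  case (less m)
  show ?case
  proof (cases "m = 1")
    case True
    have "C \<subseteq> setpow N B 1" if B: "B \<in> P" and C: "C \<in> P" and meet: "C \<inter> setpow N B 1 \<noteq> {}" for B C
    proof -
      have B1: "setpow N B 1 = B"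
        using setpow_cong_one[OF unital_partition_block(2)[OF u B]] by simp
      then obtain z where "z \<in> C" "z \<in> B" using meet by blast
      hence "C = B" by (rule unital_partition_unique_block[OF u C B])
      thus ?thesis using B1 by simp
    qed
    thus ?thesis using True unfolding saturates_def by blast
  next
    case False
    then obtain q where q: "prime q" "q dvd m" using prime_factor_nat by blast
    then obtain m' where m': "m = q * m'" by (elim dvdE)
    have m'0: "m' > 0" and cq: "coprime q N" and cm': "coprime m' N" using less.prems m' by auto
    have "m' < m" using m' m'0 prime_gt_1_nat[OF q(1)] by simp
    hence "saturates N P m'" using less.IH m'0 cm' by blast
    moreover have "saturates N P q"
      unfolding saturates_def
    proof (intro ballI impI subsetI)
      fix B C w assume "B \<in> P" "C \<in> P" "C \<inter> setpow N B q \<noteq> {}" "w \<in> C"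
      then obtain z where "z \<in> C" "z \<in> setpow N B q" by blast
      thus "w \<in> setpow N B q"
        using prime_multiple_saturated[OF u N \<open>B \<in> P\<close> q(1) cq \<open>C \<in> P\<close> _ _ \<open>w \<in> C\<close>] by blast
    qed
    ultimately show ?thesis using saturates_mult[OF u N] m' by (simp add: mult.commute)
  qed
qed

lemma unit_multiple_block:
  assumes u: "unital_partition N P" and N: "N > 1" and c: "coprime m N" and B: "B \<in> P"
  shows "setpow N B m \<in> P"
proof -
  have N0: "N > 0" and m0: "m > 0" using c N by (auto intro: Nat.gr0I)
  define m' where "m' = m ^ (totient N - 1)"
  have "m * m' = m ^ totient N" unfolding m'_def using N by (simp add: power_Suc[symmetric])
  hence inv: "[m * m' = 1] (mod N)" "[m' * m = 1] (mod N)"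
    using euler_theorem[OF c] by (simp_all add: mult.commute)
  have sat: "saturates N P m" "saturates N P m'"
    using unit_saturates[OF u N0] m0 c unfolding m'_def by simp_all
  obtain b where "b \<in> B" using unital_partition_block(1)[OF u B] by blast
  hence v: "(m * b) mod N \<in> setpow N B m" by (simp add: setpow_def)
  have "(m * b) mod N < N" using N0 by simp
  then obtain C where C: "C \<in> P" "(m * b) mod N \<in> C" using unital_partition_cover[OF u] by blast
  have "C \<subseteq> setpow N B m" using sat(1) B C v unfolding saturates_def by blast
  hence "setpow N C m' \<subseteq> setpow N (setpow N B m) m'" by (rule setpow_mono)
  also have "\<dots> = B" unfolding setpow_setpow by (rule setpow_cong_one[OF unital_partition_block(2)[OF u B] inv(1)])
  finally have sub: "setpow N C m' \<subseteq> B" .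
  moreover have "setpow N C m' \<noteq> {}" using C(2) by (auto simp: setpow_def)
  ultimately have "B \<subseteq> setpow N C m'" using sat(2) C(1) B unfolding saturates_def by blast
  hence "setpow N B m = setpow N C (m' * m)" using sub by (metis subset_antisym setpow_setpow)
  also have "\<dots> = C" by (rule setpow_cong_one[OF unital_partition_block(2)[OF u C(1)] inv(2)])
  finally show ?thesis using C(1) by simp
qed

lemma block_stabiliser:
  assumes u: "unital_partition N P" and N: "N > 1" and c: "coprime m N" and A: "A \<in> P"
    and z: "z \<in> A" and mz: "(m * z) mod N \<in> A"
  shows "setpow N A m = A"
proof -
  have "(m * z) mod N \<in> setpow N A m" using z by (simp add: setpow_def)
  thus ?thesis using unital_partition_unique_block[OF u unit_multiple_block[OF u N c A] A _ mz] by blast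
qed

lemma block_stabiliser_cancel:
  assumes u: "unital_partition N P" and N: "N > 1" and c: "coprime m N" and A: "A \<in> P"
    and sA: "setpow N A m = A" and w: "w < N" and mw: "(m * w) mod N \<in> A"
  shows "w \<in> A"
proof -
  obtain W where W: "W \<in> P" "w \<in> W" using unital_partition_cover[OF u w] by blast
  have "(m * w) mod N \<in> setpow N W m" using W(2) by (simp add: setpow_def)
  hence "setpow N W m = setpow N A m"
    using unital_partition_unique_block[OF u unit_multiple_block[OF u N c W(1)] A _ mw] sA by blast
  hence "W = A"
    using inj_on_image_eq_iff[OF inj_on_mult_mod[OF c] unital_partition_block(2)[OF u W(1)]
        unital_partition_block(2)[OF u A]] by (simp add: setpow_def)
  thus ?thesis using W(2) by simp
qed

section \<open>Valuations and unit multiples in Z/p^n\<close>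

lemma coprime_prime_iff_not_dvd: "prime (p::nat) \<Longrightarrow> coprime a p \<longleftrightarrow> \<not> p dvd a"
  by (meson coprime_commute coprime_divisors coprime_self not_prime_unit prime_imp_coprime_nat)

lemma coprime_prime_mod: "prime (p::nat) \<Longrightarrow> coprime a p \<Longrightarrow> p dvd d \<Longrightarrow> coprime (a mod d) p"
  using coprime_prime_iff_not_dvd dvd_mod_iff by metis

lemma multiplicity_prime_power_times_coprime:
  fixes p u :: nat assumes p: "prime p" and u: "coprime u p"
  shows "multiplicity p (p ^ v * u) = v"
proof -
  have nd: "\<not> p dvd u" using u p coprime_prime_iff_not_dvd by blast
  hence "u \<noteq> 0" by (intro notI) simp
  hence "multiplicity p (p ^ v * u) = multiplicity p (p ^ v) + multiplicity p u"
    using p by (intro prime_elem_multiplicity_mult_distrib) auto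
  thus ?thesis using p nd by (simp add: not_dvd_imp_multiplicity_0)
qed

lemma valuation_decomposition:
  fixes p z n :: nat assumes p: "prime p" and z: "0 < z" "z < p ^ n"
  obtains u where "z = p ^ multiplicity p z * u" "coprime u p"
    "u < p ^ (n - multiplicity p z)" "multiplicity p z < n"
proof -
  have "z \<noteq> 0" and "\<not> is_unit p" using z p by auto
  then obtain u where u: "z = p ^ multiplicity p z * u" "\<not> p dvd u"
    by (rule multiplicity_decompose')
  have p_gt_1: "p > 1" using p prime_gt_1_nat by blast
  have "p ^ multiplicity p z \<le> z" using u(1) z(1) by (metis dvd_imp_le dvd_triv_left)
  hence "p ^ multiplicity p z < p ^ n" using z by simp
  hence vn: "multiplicity p z < n" using p_gt_1 by (simp add: power_strict_increasing_iff)
  have "p ^ multiplicity p z * u < p ^ multiplicity p z * p ^ (n - multiplicity p z)"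
    using z u vn by (simp add: power_add[symmetric])
  hence "u < p ^ (n - multiplicity p z)" by simp
  thus ?thesis using that u vn coprime_prime_iff_not_dvd[OF p] by blast
qed

lemma card_residue_class:
  fixes d e r :: nat assumes d: "0 < d" and r: "r < d"
  shows "card {m. m < d * e \<and> m mod d = r} = e"
proof -
  have "{m. m < d * e \<and> m mod d = r} = (\<lambda>j. r + j * d) ` {..<e}"
  proof (intro equalityI subsetI)
    fix m assume "m \<in> {m. m < d * e \<and> m mod d = r}"
    hence m: "m < d * e" "m mod d = r" by auto
    have "m = r + (m div d) * d" using m(2) by (metis mod_div_mult_eq add.commute)
    moreover have "m div d < e" using m(1) d by (simp add: div_less_iff_less_mult mult.commute)
    ultimately show "m \<in> (\<lambda>j. r + j * d) ` {..<e}" by blast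
  next
    fix m assume "m \<in> (\<lambda>j. r + j * d) ` {..<e}"
    then obtain j where j: "j < e" "m = r + j * d" by auto
    have "r + j * d < Suc j * d" using r by simp
    also have "\<dots> \<le> e * d" using j(1) by (intro mult_le_mono1) simp
    finally show "m \<in> {m. m < d * e \<and> m mod d = r}" using j r by (simp add: mult.commute)
  qed
  moreover have "inj_on (\<lambda>j. r + j * d) {..<e}" using d by (auto intro!: inj_onI)
  ultimately show ?thesis by (simp add: card_image)
qed

lemma linear_congruence_residue_class:
  fixes d u w :: nat assumes d: "0 < d" and u: "coprime u d"
  obtains r where "r < d" and "\<And>m. (m * u) mod d = w mod d \<longleftrightarrow> m mod d = r"
proof -
  define ui where "ui = u ^ (totient d - 1)"
  have "u * ui = u ^ totient d" unfolding ui_def using d by (simp add: power_Suc[symmetric])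
  hence inv: "[u * ui = 1] (mod d)" using euler_theorem[OF u] by simp
  have "(m * u) mod d = w mod d \<longleftrightarrow> m mod d = (w * ui) mod d" for m
  proof
    assume "(m * u) mod d = w mod d"
    hence "[m * u * ui = w * ui] (mod d)" by (intro cong_scalar_right) (simp add: cong_def)
    moreover have "[m * (u * ui) = m * 1] (mod d)" using inv by (rule cong_scalar_left)
    ultimately show "m mod d = (w * ui) mod d"
      by (metis cong_def cong_sym cong_trans mult.assoc mult_1_right)
  next
    assume "m mod d = (w * ui) mod d"
    hence "[m * u = w * ui * u] (mod d)" by (intro cong_scalar_right) (simp add: cong_def)
    moreover have "[w * (u * ui) = w * 1] (mod d)" using inv by (rule cong_scalar_left)
    ultimately show "(m * u) mod d = w mod d"
      by (metis cong_def cong_trans mult.commute mult.left_commute mult_1_right)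
  qed
  thus ?thesis using that[of "(w * ui) mod d"] d by simp
qed

lemma unit_fibre_card:
  fixes p n z w :: nat
  assumes p: "prime p" and z: "0 < z" "z < p ^ n" and w: "0 < w" "w < p ^ n"
    and same: "multiplicity p w = multiplicity p z"
  shows "card {m. m < p ^ n \<and> coprime m (p ^ n) \<and> (m * z) mod p ^ n = w} = p ^ multiplicity p z"
proof -
  define v where "v = multiplicity p z"
  define d where "d = p ^ (n - v)"
  obtain u where u: "z = p ^ v * u" "coprime u p" "u < d" "v < n"
    using valuation_decomposition[OF p z] unfolding v_def d_def by metis
  obtain u' where u': "w = p ^ v * u'" "coprime u' p" "u' < d"
    using valuation_decomposition[OF p w] same unfolding v_def d_def by metis
  have p0: "p > 0" and d0: "d > 0" and pd: "p dvd d"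
    using p u(4) prime_gt_0_nat unfolding d_def by auto
  have N: "p ^ n = p ^ v * d" unfolding d_def using u(4) by (simp add: power_add[symmetric])
  have "coprime u d" using u(2) unfolding d_def by simp
  obtain r where r: "r < d" "\<And>m. (m * u) mod d = u' mod d \<longleftrightarrow> m mod d = r"
    using linear_congruence_residue_class[OF d0 \<open>coprime u d\<close>, of u'] by blast
  have fibre: "(m * z) mod p ^ n = w \<longleftrightarrow> m mod d = r" for m
  proof -
    have "m * z = p ^ v * (m * u)" unfolding u(1) by (simp add: mult.left_commute)
    hence "(m * z) mod p ^ n = p ^ v * ((m * u) mod d)" unfolding N by (simp only: mod_mult_mult1)
    thus ?thesis using u'(1,3) r(2)[of m] p0 by simp
  qed
  have "coprime m (p ^ n)" if "m mod d = r" for m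
  proof -
    have "(m * u) mod d = u'" using that r(2) u'(3) by simp
    have "\<not> p dvd m"
    proof
      assume "p dvd m"
      hence "p dvd (m * u) mod d" using pd by (simp add: dvd_mod)
      thus False using \<open>(m * u) mod d = u'\<close> u'(2) coprime_prime_iff_not_dvd[OF p] by simp
    qed
    thus ?thesis using coprime_prime_iff_not_dvd[OF p] by simp
  qed
  hence "{m. m < p ^ n \<and> coprime m (p ^ n) \<and> (m * z) mod p ^ n = w} = {m. m < d * p ^ v \<and> m mod d = r}"
    using fibre N by (auto simp: mult.commute)
  thus ?thesis using card_residue_class[OF d0 r(1)] unfolding v_def by simp
qed

lemma unit_multiple_valuation:
  fixes p n z m :: nat
  assumes p: "prime p" and z: "0 < z" "z < p ^ n" and m: "coprime m p"
  shows "0 < (m * z) mod p ^ n" "multiplicity p ((m * z) mod p ^ n) = multiplicity p z"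
proof -
  define v where "v = multiplicity p z"
  define d where "d = p ^ (n - v)"
  obtain u where u: "z = p ^ v * u" "coprime u p" "u < d" "v < n"
    using valuation_decomposition[OF p z] unfolding v_def d_def by metis
  have p0: "p > 0" using p prime_gt_0_nat by blast
  have N: "p ^ n = p ^ v * d" unfolding d_def using u(4) by (simp add: power_add[symmetric])
  have e: "(m * z) mod (p ^ n) = p ^ v * ((m * u) mod d)"
    unfolding N u(1) by (simp add: mult.left_commute mod_mult_mult1)
  have "coprime ((m * u) mod d) p"
    using coprime_prime_mod[OF p _ ] m u(2,4) unfolding d_def by simp
  moreover from this have "(m * u) mod d \<noteq> 0" using p by (cases "(m * u) mod d = 0") auto
  ultimately show "0 < (m * z) mod p ^ n" "multiplicity p ((m * z) mod p ^ n) = multiplicity p z"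
    unfolding e using multiplicity_prime_power_times_coprime[OF p] p0 v_def by simp_all
qed

section \<open>Blocks of a unital partition of Z/p^n satisfying condition (p)\<close>

text \<open>A sum of powers p^(vm - v) over a finite set V of exponents v <= vm, containing vm
  and some other exponent, is 1 plus a positive multiple of p, hence not a power of p.\<close>
lemma sum_prime_powers_not_prime_power:
  fixes p :: nat and V :: "nat set"
  assumes p: "prime p" and V: "finite V" and vm: "vm \<in> V" and le: "\<forall>v\<in>V. v \<le> vm"
    and v0: "v0 \<in> V" "v0 \<noteq> vm" and f: "(\<Sum>v\<in>V. p ^ (vm - v)) = p ^ f"
  shows False
proof -
  have split: "(\<Sum>v\<in>V. p ^ (vm - v)) = 1 + (\<Sum>v\<in>V - {vm}. p ^ (vm - v))"
    using sum.remove[OF V vm, of "\<lambda>v. p ^ (vm - v)"] by simp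
  have rest_dvd: "p dvd (\<Sum>v\<in>V - {vm}. p ^ (vm - v))"
  proof (rule dvd_sum)
    fix v assume "v \<in> V - {vm}"
    hence "vm - v \<noteq> 0" using le by force
    thus "p dvd p ^ (vm - v)" by simp
  qed
  have "p ^ (vm - v0) \<le> (\<Sum>v\<in>V - {vm}. p ^ (vm - v))"
    by (rule member_le_sum) (use v0 V in auto)
  moreover have "p ^ (vm - v0) > 0" using p prime_gt_0_nat by simp
  ultimately have "p ^ f \<noteq> 1" using f split by linarith
  hence "p dvd p ^ f" by (cases f) auto
  hence "p dvd 1 + (\<Sum>v\<in>V - {vm}. p ^ (vm - v))" using f split by simp
  hence "p dvd 1" using rest_dvd by (metis dvd_add_left_iff)
  thus False using p by simp
qed

lemma balanced_layers_single:
  fixes p :: nat and A :: "'a set" and val :: "'a \<Rightarrow> nat"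
  assumes p: "prime p" and A: "finite A" and cardA: "card A = p ^ E"
    and balanced: "\<And>z. z \<in> A \<Longrightarrow> card {w\<in>A. val w = val z} * p ^ val z = c"
    and z: "z \<in> A" and z': "z' \<in> A"
  shows "val z = val z'"
proof -
  define L where "L v = card {w\<in>A. val w = v}" for v
  define V where "V = val ` A"
  define vm where "vm = Max V"
  have fV: "finite V" and "V \<noteq> {}" unfolding V_def using A z by auto
  hence vm: "vm \<in> V" and le: "\<forall>v\<in>V. v \<le> vm" unfolding vm_def by simp_all
  have p0: "p > 0" using p prime_gt_0_nat by blast
  have layer: "L v = L vm * p ^ (vm - v)" if v: "v \<in> V" for v
  proof -
    have "L v * p ^ v = L vm * p ^ vm" using balanced v vm unfolding V_def L_def by auto
    hence "L v * p ^ v = L vm * p ^ (vm - v) * p ^ v"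
      using le v by (simp add: power_add[symmetric])
    thus ?thesis using p0 by simp
  qed
  have "card A = card (\<Union>v\<in>V. {w\<in>A. val w = v})" unfolding V_def by (rule arg_cong[of _ _ card]) auto
  also have "\<dots> = (\<Sum>v\<in>V. L v)" unfolding L_def by (rule card_UN_disjoint) (use fV A in auto)
  also have "\<dots> = L vm * (\<Sum>v\<in>V. p ^ (vm - v))" by (simp add: layer sum_distrib_left)
  finally have "(\<Sum>v\<in>V. p ^ (vm - v)) dvd p ^ E" using cardA by (metis dvd_triv_right)
  then obtain f where "(\<Sum>v\<in>V. p ^ (vm - v)) = p ^ f" using divides_primepow_nat[OF p] by blast
  hence "V = {vm}" using sum_prime_powers_not_prime_power[OF p fV vm le] vm by blast
  hence "val z = vm" "val z' = vm" using z z' unfolding V_def by blast+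
  thus ?thesis by simp
qed

text \<open>The stabiliser of a block, counted through z in A: its elements are the units mapping z
  into the layer of A of the valuation of z, and every such fibre has p^(v_p z) elements.\<close>
lemma stabiliser_card:
  assumes u: "unital_partition (p ^ n) P" and p: "prime p" and A: "A \<in> P" and A0: "0 \<notin> A"
    and z: "z \<in> A"
  shows "card {m. m < p ^ n \<and> coprime m (p ^ n) \<and> (m * z) mod p ^ n \<in> A}
       = card {w\<in>A. multiplicity p w = multiplicity p z} * p ^ multiplicity p z"
proof -
  have Apos: "0 < w \<and> w < p ^ n" if "w \<in> A" for w
    using that A0 unital_partition_block(2)[OF u A] by (auto intro: Nat.gr0I)
  hence "n \<noteq> 0" using z by (cases n) auto
  define F where "F w = {m. m < p ^ n \<and> coprime m (p ^ n) \<and> (m * z) mod p ^ n = w}" for w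
  have "{m. m < p ^ n \<and> coprime m (p ^ n) \<and> (m * z) mod p ^ n \<in> A}
      = (\<Union>w\<in>{w\<in>A. multiplicity p w = multiplicity p z}. F w)"
  proof (intro equalityI subsetI)
    fix m assume "m \<in> {m. m < p ^ n \<and> coprime m (p ^ n) \<and> (m * z) mod p ^ n \<in> A}"
    hence m: "m < p ^ n" "coprime m (p ^ n)" "(m * z) mod p ^ n \<in> A" by auto
    have "coprime m p" using m(2) \<open>n \<noteq> 0\<close> by simp
    hence "multiplicity p ((m * z) mod p ^ n) = multiplicity p z"
      using unit_multiple_valuation(2)[OF p] Apos[OF z] by blast
    thus "m \<in> (\<Union>w\<in>{w\<in>A. multiplicity p w = multiplicity p z}. F w)" using m unfolding F_def by auto
  qed (auto simp: F_def)
  also have "card \<dots> = (\<Sum>w\<in>{w\<in>A. multiplicity p w = multiplicity p z}. card (F w))"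
    using finite_subset[OF unital_partition_block(2)[OF u A]]
    by (intro card_UN_disjoint) (auto simp: F_def)
  also have "\<dots> = (\<Sum>w\<in>{w\<in>A. multiplicity p w = multiplicity p z}. p ^ multiplicity p z)"
    unfolding F_def using Apos z by (intro sum.cong refl unit_fibre_card[OF p]) auto
  finally show ?thesis by simp
qed

lemma block_constant_valuation:
  assumes u: "unital_partition (p ^ n) P" and p: "prime p" and cp: "cond_p p P"
    and A: "A \<in> P" and A0: "0 \<notin> A" and z: "z \<in> A" and z': "z' \<in> A"
  shows "multiplicity p z = multiplicity p z'"
proof -
  have N: "p ^ n > 1" using z A0 unital_partition_block(2)[OF u A] by (cases "z = 0") auto
  define S where "S z = {m. m < p ^ n \<and> coprime m (p ^ n) \<and> (m * z) mod p ^ n \<in> A}" for z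
  have "S w \<subseteq> S w'" if "w \<in> A" "w' \<in> A" for w w'
  proof
    fix m assume "m \<in> S w"
    hence m: "m < p ^ n" "coprime m (p ^ n)" "(m * w) mod p ^ n \<in> A" unfolding S_def by auto
    have "(m * w') mod p ^ n \<in> setpow (p ^ n) A m" using that(2) by (auto simp: setpow_def)
    thus "m \<in> S w'" using block_stabiliser[OF u N m(2) A that(1) m(3)] m unfolding S_def by simp
  qed
  hence "card (S w) = card (S z)" if "w \<in> A" for w using that z by (metis subset_antisym)
  hence "card {w'\<in>A. multiplicity p w' = multiplicity p w} * p ^ multiplicity p w = card (S z)"
    if "w \<in> A" for w using stabiliser_card[OF u p A A0 that] that unfolding S_def by simp
  moreover obtain E where "card A = p ^ E" using cp A unfolding cond_p_def by blast
  ultimately show ?thesis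
    using balanced_layers_single[OF p _ _ _ z z'] finite_subset[OF unital_partition_block(2)[OF u A]]
    by blast
qed

section \<open>Units and primitive roots modulo p^n\<close>

lemma card_units_below: "N > 1 \<Longrightarrow> card {m. m < N \<and> coprime m N} = totient N"
  unfolding totient_def totatives_def
  by (rule arg_cong[of _ _ card]) (auto simp: order.order_iff_strict intro: Nat.gr0I)

lemma residue_primroot_power_cong:
  assumes N: "N > 1" and g: "residue_primroot N g" and m: "coprime m N"
  obtains u where "[m = g ^ u] (mod N)"
proof -
  have cm: "coprime (m mod N) N" using m N by simp
  have "m mod N \<noteq> 0"
  proof
    assume "m mod N = 0"
    hence "N dvd 1" using cm by simp
    thus False using N by simp
  qed
  hence "m mod N \<in> totatives N" using m N by (auto simp: totatives_def intro: less_imp_le)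
  hence "m mod N \<in> (\<lambda>i. g ^ i mod N) ` {..<totient N}"
    using residue_primroot_is_generator[OF N g] unfolding bij_betw_def by simp
  then obtain u where "m mod N = g ^ u mod N" by blast
  thus ?thesis using that unfolding cong_def by simp
qed

lemma power_mod_below_ord:
  fixes N g i :: nat assumes "coprime N g"
  shows "g ^ i mod N \<in> (\<lambda>j. g ^ j mod N) ` {..<ord N g}"
proof -
  have "g ^ i mod N = g ^ (i mod ord N g) mod N"
    using order_divides_expdiff[OF assms, of i "i mod ord N g"] by (simp add: cong_def)
  moreover have "i mod ord N g < ord N g" using assms by simp
  ultimately show ?thesis by blast
qed

text \<open>A primitive root modulo p^n remains one modulo p^b for 1 <= b <= n: every unit modulo
  p^b is a unit modulo p^n, hence a power of g, so g has order at least phi(p^b) mod p^b.\<close>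
lemma residue_primroot_prime_power_restrict:
  fixes p n b g :: nat
  assumes p: "prime p" and b: "1 \<le> b" "b \<le> n" and g: "residue_primroot (p ^ n) g"
  shows "ord (p ^ b) g = totient (p ^ b)"
proof -
  have p_gt_1: "p > 1" using p prime_gt_1_nat by blast
  have N_gt_1: "p ^ n > 1" using p_gt_1 b by (intro one_less_power) auto
  have pbn: "p ^ b \<le> p ^ n" "p ^ b dvd p ^ n" using b p_gt_1 by (simp_all add: le_imp_power_dvd)
  have coprime_pb_g: "coprime (p ^ b) g" using g b by (simp add: residue_primroot_def)
  define d where "d = ord (p ^ b) g"
  have "[g ^ totient (p ^ b) = 1] (mod p ^ b)"
    using euler_theorem[of g "p ^ b"] coprime_pb_g by (simp add: coprime_commute)
  hence "d dvd totient (p ^ b)" unfolding d_def by (simp only: ord_divides)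
  hence "d \<le> totient (p ^ b)" using p_gt_1 by (intro dvd_imp_le) simp_all
  have "totatives (p ^ b) \<subseteq> (\<lambda>i. g ^ i mod p ^ b) ` {..<d}"
  proof
    fix r assume "r \<in> totatives (p ^ b)"
    hence r: "0 < r" "r < p ^ b" "coprime r p"
      using b p_gt_1 one_less_power[of p b] by (auto simp: totatives_def order.order_iff_strict)
    hence "r \<in> totatives (p ^ n)" using b pbn(1) by (auto simp: totatives_def)
    hence "r \<in> (\<lambda>i. g ^ i mod p ^ n) ` {..<totient (p ^ n)}"
      using residue_primroot_is_generator[OF N_gt_1 g] unfolding bij_betw_def by simp
    then obtain i where "r = g ^ i mod p ^ n" by blast
    hence "r = g ^ i mod p ^ b" using pbn(2) r(2) by (metis mod_less mod_mod_cancel)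
    thus "r \<in> (\<lambda>i. g ^ i mod p ^ b) ` {..<d}"
      using power_mod_below_ord[OF coprime_pb_g] unfolding d_def by simp
  qed
  hence "totient (p ^ b) \<le> card ((\<lambda>i. g ^ i mod p ^ b) ` {..<d})"
    unfolding totient_def by (intro card_mono) auto
  also have "\<dots> \<le> d" using card_image_le[of "{..<d}" "\<lambda>i. g ^ i mod p ^ b"] by simp
  finally show ?thesis using \<open>d \<le> totient (p ^ b)\<close> unfolding d_def by simp
qed

lemma residue_primroot_power_cong_one:
  fixes p n b g u :: nat
  assumes p: "prime p" and b: "b \<le> n" and g: "residue_primroot (p ^ n) g"
  shows "[g ^ u = 1] (mod p ^ b) \<longleftrightarrow> totient (p ^ b) dvd u"
proof (cases "b = 0")
  case False
  thus ?thesis using residue_primroot_prime_power_restrict[OF p _ b g] ord_divides[of g u "p ^ b"] by simp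
qed simp

lemma cong_one_fixes_multiples:
  fixes G M K w :: nat
  assumes "[G = 1] (mod M)"
  shows "(G * (w * K)) mod (M * K) = (w * K) mod (M * K)"
proof -
  have "(G * (w * K)) mod (M * K) = ((G * w) mod M) * K"
    by (simp only: mult.assoc[symmetric] mod_mult_mult2)
  also have "(G * w) mod M = (1 * w) mod M" using cong_scalar_right[OF assms, of w] by (simp only: cong_def)
  also have "(1 * w) mod M * K = (w * K) mod (M * K)" by (simp only: mult_1 mod_mult_mult2)
  finally show ?thesis .
qed

lemma upow_eq_power_mod:
  assumes N: "N > 0"
  shows "upow N a i = nat (a mod int N) ^ nat (i mod int (totient N)) mod N"
proof -
  obtain G where G: "a mod int N = int G" using N by (metis nonneg_int_cases pos_mod_sign of_nat_0_less_iff)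
  have "int G ^ nat (i mod int (totient N)) mod int N = int (G ^ nat (i mod int (totient N)) mod N)"
    by (simp only: of_nat_power[symmetric] of_nat_mod[symmetric])
  thus ?thesis unfolding upow_def G by (simp only: nat_int)
qed

lemma unit_coset_image_subset:
  fixes p n k b c x m :: nat
  assumes p: "prime p" and kbn: "k + b \<le> n" and m: "m \<noteq> 0" "[m = 1] (mod p ^ b)"
  obtains s where "s < p ^ (n - k - b)"
    and "(c * (m * (p ^ k * x))) mod p ^ n = (x * (p ^ k * (c + s * p ^ b))) mod p ^ n"
proof -
  define e where "e = n - k - b"
  have Nfac: "p ^ n = p ^ k * p ^ b * p ^ e" unfolding e_def using kbn by (simp add: power_add[symmetric])
  have "p ^ b dvd m - 1" using m by (simp add: cong_altdef_nat)
  then obtain \<tau> where "m - 1 = p ^ b * \<tau>" by (elim dvdE)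
  hence mt: "m = 1 + p ^ b * \<tau>" using m(1) by simp
  define s where "s = (c * \<tau>) mod p ^ e"
  define q where "q = (c * \<tau>) div p ^ e"
  have ctq: "c * \<tau> = s + p ^ e * q" unfolding s_def q_def by simp
  have "c * (m * (p ^ k * x)) = x * p ^ k * (c + (c * \<tau>) * p ^ b)"
    unfolding mt by (simp add: algebra_simps)
  also have "\<dots> = x * (p ^ k * (c + s * p ^ b)) + (p ^ k * p ^ b * p ^ e) * (x * q)"
    unfolding ctq by (simp add: algebra_simps)
  also have "\<dots> = x * (p ^ k * (c + s * p ^ b)) + p ^ n * (x * q)" unfolding Nfac ..
  finally have "(c * (m * (p ^ k * x))) mod p ^ n = (x * (p ^ k * (c + s * p ^ b))) mod p ^ n" by simp
  moreover have "s < p ^ e" unfolding s_def using prime_gt_0_nat[OF p] by simp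
  ultimately show ?thesis using that unfolding e_def by blast
qed

text \<open>Conversely x p^k (c + s p^b) arises from the unit m = c^(-1) (c + s p^b), which is
  congruent to 1 mod p^b; here b >= 1 makes c + s p^b prime to p.\<close>
lemma unit_coset_image_supset:
  fixes p n k b c x s :: nat
  assumes p: "prime p" and b: "1 \<le> b" and kbn: "k + b \<le> n" and c: "coprime c p"
  obtains m where "coprime m (p ^ n)" "[m = 1] (mod p ^ b)"
    and "(c * (m * (p ^ k * x))) mod p ^ n = (x * (p ^ k * (c + s * p ^ b))) mod p ^ n"
proof -
  have cN: "coprime c (p ^ n)" using c by simp
  define ci where "ci = c ^ (totient (p ^ n) - 1)"
  have "totient (p ^ n) > 0" using prime_gt_0_nat[OF p] by simp
  hence "c * ci = c ^ totient (p ^ n)" unfolding ci_def by (cases "totient (p ^ n)") simp_all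
  hence cci: "[c * ci = 1] (mod p ^ n)" using euler_theorem[OF cN] by simp
  define m where "m = ci * (c + s * p ^ b)"
  have "\<not> p dvd c + s * p ^ b"
  proof
    assume h: "p dvd c + s * p ^ b"
    have "p dvd s * p ^ b" using b by (simp add: dvd_power)
    hence "p dvd c" using h by (simp add: dvd_add_left_iff)
    thus False using c coprime_prime_iff_not_dvd[OF p] by blast
  qed
  hence "coprime (c + s * p ^ b) p" using coprime_prime_iff_not_dvd[OF p] by blast
  moreover have "coprime ci p" unfolding ci_def using c by simp
  ultimately have mN: "coprime m (p ^ n)" unfolding m_def by simp
  have "m = ci * c + p ^ b * (ci * s)" unfolding m_def by (simp add: algebra_simps)
  hence "m mod p ^ b = (ci * c) mod p ^ b" by (simp only: mod_mult_self2)
  moreover have "[c * ci = 1] (mod p ^ b)"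
    using cong_dvd_modulus_nat[OF cci] kbn by (simp add: le_imp_power_dvd)
  ultimately have m1: "[m = 1] (mod p ^ b)" by (simp add: cong_def mult.commute)
  have "c * (m * (p ^ k * x)) = (c * ci) * ((c + s * p ^ b) * (p ^ k * x))"
    unfolding m_def by (simp add: algebra_simps)
  hence "(c * (m * (p ^ k * x))) mod p ^ n = (1 * ((c + s * p ^ b) * (p ^ k * x))) mod p ^ n"
    using cong_scalar_right[OF cci, of "(c + s * p ^ b) * (p ^ k * x)", unfolded cong_def]
    by (simp only:)
  also have "\<dots> = (x * (p ^ k * (c + s * p ^ b))) mod p ^ n" by (simp add: algebra_simps)
  finally show ?thesis using that mN m1 by blast
qed

lemma unit_coset_image:
  fixes p n k b c x :: nat
  assumes p: "prime p" and b: "1 \<le> b" and kbn: "k + b \<le> n" and c: "coprime c p"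
  shows "{(c * (m * (p ^ k * x))) mod p ^ n | m. coprime m (p ^ n) \<and> [m = 1] (mod p ^ b)}
       = {(x * (p ^ k * (c + s * p ^ b))) mod p ^ n | s. s < p ^ (n - k - b)}"
proof (intro equalityI subsetI)
  have N_gt_1: "p ^ n > 1" using b kbn prime_gt_1_nat[OF p] by (intro one_less_power) auto
  fix z
  {
    assume "z \<in> {(c * (m * (p ^ k * x))) mod p ^ n | m. coprime m (p ^ n) \<and> [m = 1] (mod p ^ b)}"
    then obtain m where m: "coprime m (p ^ n)" "[m = 1] (mod p ^ b)"
      and z: "z = (c * (m * (p ^ k * x))) mod p ^ n" by blast
    have "m \<noteq> 0" using m(1) N_gt_1 prime_gt_1_nat[OF p] by (intro notI) auto
    then obtain s where "s < p ^ (n - k - b)"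
      "(c * (m * (p ^ k * x))) mod p ^ n = (x * (p ^ k * (c + s * p ^ b))) mod p ^ n"
      using unit_coset_image_subset[OF p kbn _ m(2)] by blast
    thus "z \<in> {(x * (p ^ k * (c + s * p ^ b))) mod p ^ n | s. s < p ^ (n - k - b)}"
      using z by blast
  next
    assume "z \<in> {(x * (p ^ k * (c + s * p ^ b))) mod p ^ n | s. s < p ^ (n - k - b)}"
    then obtain s where z: "z = (x * (p ^ k * (c + s * p ^ b))) mod p ^ n" by blast
    obtain m where "coprime m (p ^ n)" "[m = 1] (mod p ^ b)"
      "(c * (m * (p ^ k * x))) mod p ^ n = (x * (p ^ k * (c + s * p ^ b))) mod p ^ n"
      using unit_coset_image_supset[OF p b kbn c] by blast
    thus "z \<in> {(c * (m * (p ^ k * x))) mod p ^ n | m. coprime m (p ^ n) \<and> [m = 1] (mod p ^ b)}"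
      using z by (metis (mono_tags, lifting) mem_Collect_eq)
  }
qed

section \<open>The block through x^(p^k)\<close>

text \<open>The hypotheses of mainTheorem12 (with A \<in> P in place of A \<in> P_k).  In the model,
  g is the residue of alpha, y = p^k x the element x^(p^k), and U = u_k.\<close>
locale level_block =
  fixes p n k b :: nat and P :: "nat set set" and A :: "nat set" and x :: nat and \<alpha> :: int
  assumes p: "prime p" and odd: "odd p" and n1: "n \<ge> 1"
    and up: "unital_partition (p ^ n) P" and cp: "cond_p p P" and kn: "k \<le> n - 1"
    and A: "A \<in> P" and x: "x \<in> gens (p ^ n)" and yA: "(p ^ k * x) mod (p ^ n) \<in> A"
    and g: "residue_primroot (p ^ n) (nat (\<alpha> mod int (p ^ n)))"
    and ukb: "uk (p ^ n) \<alpha> ((p ^ k * x) mod (p ^ n)) A = totient (p ^ b)"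
begin

abbreviation "N \<equiv> p ^ n"
abbreviation "y \<equiv> (p ^ k * x) mod (p ^ n)"
abbreviation "g \<equiv> nat (\<alpha> mod int (p ^ n))"
abbreviation "U \<equiv> uk (p ^ n) \<alpha> ((p ^ k * x) mod (p ^ n)) A"

lemma p_gt_1: "p > 1" using p prime_gt_1_nat by blast

lemma N_gt_1: "N > 1" using p_gt_1 n1 by (intro one_less_power) auto

lemma g_coprime_N: "coprime g N" using g by (simp add: residue_primroot_def coprime_commute)

lemma g_coprime_p: "coprime g p" using g_coprime_N n1 by simp

lemma y_decomposition: "y = p ^ k * (x mod p ^ (n - k))" "coprime (x mod p ^ (n - k)) p"
proof -
  have "p ^ n = p ^ k * p ^ (n - k)" using kn n1 by (simp add: power_add[symmetric])
  thus "y = p ^ k * (x mod p ^ (n - k))" by (simp add: mod_mult_mult1)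
  have "coprime x p" using x n1 by (simp add: gens_def)
  moreover have "n - k \<noteq> 0" using kn n1 by simp
  hence "p dvd p ^ (n - k)" by simp
  ultimately show "coprime (x mod p ^ (n - k)) p" by (rule coprime_prime_mod[OF p])
qed

lemma y_nonzero: "y \<noteq> 0"
proof -
  have "x mod p ^ (n - k) \<noteq> 0" using y_decomposition(2) p_gt_1 by (intro notI) simp
  thus ?thesis using y_decomposition(1) p_gt_1 by simp
qed

lemma valuation_y: "multiplicity p y = k"
  using y_decomposition multiplicity_prime_power_times_coprime[OF p] by simp

lemma zero_notin_A: "0 \<notin> A"
  by (rule unital_partition_zero_notin[OF up A yA y_nonzero])

lemma upow_cong_power: "[upow N \<alpha> (int u) = g ^ u] (mod N)"
proof -
  have "nat (int u mod int (totient N)) = u mod totient N" by (simp flip: of_nat_mod)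
  moreover have "upow N \<alpha> (int u) = g ^ nat (int u mod int (totient N)) mod N"
    by (rule upow_eq_power_mod) (use p_gt_1 in simp)
  ultimately have "upow N \<alpha> (int u) = g ^ (u mod totient N) mod N" by simp
  moreover have "[g ^ (u mod totient N) = g ^ u] (mod N)"
    using order_divides_expdiff[OF g_coprime_N[unfolded coprime_commute[of g]]] g
    by (simp add: residue_primroot_def cong_def)
  ultimately show ?thesis by (simp add: cong_def)
qed

lemma U_least: "U > 0" "(g ^ U * y) mod N \<in> A" "\<And>u. 0 < u \<Longrightarrow> u < U \<Longrightarrow> (g ^ u * y) mod N \<notin> A"
proof -
  define Q where "Q u \<longleftrightarrow> u > 0 \<and> (upow N \<alpha> (int u) * y) mod N \<in> A" for u
  have U_def: "U = (LEAST u. Q u)" unfolding Q_def uk_def by simp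
  have Q: "Q u \<longleftrightarrow> u > 0 \<and> (g ^ u * y) mod N \<in> A" for u
    using cong_scalar_right[OF upow_cong_power[of u], of y] unfolding Q_def cong_def by simp
  have "(g ^ totient N * y) mod N = y"
    using cong_scalar_right[OF euler_theorem[OF g_coprime_N], of y] by (simp add: cong_def)
  hence "Q (totient N)" using Q yA p_gt_1 by simp
  hence "Q U" unfolding U_def by (rule LeastI)
  thus "U > 0" "(g ^ U * y) mod N \<in> A" using Q by simp_all
  show "(g ^ u * y) mod N \<notin> A" if "0 < u" "u < U" for u
    using not_less_Least[of u Q] that Q unfolding U_def by blast
qed

lemma stabiliser_gU: "setpow N A (g ^ U) = A"
proof -
  have "coprime (g ^ U) N" using g_coprime_N by auto
  thus ?thesis by (rule block_stabiliser[OF up N_gt_1 _ A yA U_least(2)])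
qed

lemma orbit_exponent: "(g ^ u * y) mod N \<in> A \<longleftrightarrow> U dvd u"
proof
  have N0: "N > 0" using p_gt_1 by simp
  have cU: "coprime (g ^ U) N" using g_coprime_N by auto
  show "U dvd u" if "(g ^ u * y) mod N \<in> A"
    using that
  proof (induction u rule: less_induct)
    case (less u)
    show ?case
    proof (cases "u < U")
      case True
      thus ?thesis using U_least(3)[of u] less.prems by (cases "u = 0") auto
    next
      case False
      have "(g ^ U * ((g ^ (u - U) * y) mod N)) mod N = (g ^ U * (g ^ (u - U) * y)) mod N"
        by (rule mod_mult_right_eq)
      also have "g ^ U * (g ^ (u - U) * y) = g ^ u * y"
        using False by (simp add: mult.assoc[symmetric] power_add[symmetric])
      finally have "(g ^ U * ((g ^ (u - U) * y) mod N)) mod N \<in> A" using less.prems by (simp only:)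
      hence "(g ^ (u - U) * y) mod N \<in> A"
        by (rule block_stabiliser_cancel[OF up N_gt_1 cU A stabiliser_gU mod_less_divisor[OF N0]])
      hence "U dvd u - U" by (rule less.IH[rotated]) (use U_least(1) False in simp)
      hence "U dvd (u - U) + U" by simp
      thus ?thesis using False by simp
    qed
  qed
  show "(g ^ u * y) mod N \<in> A" if "U dvd u"
  proof -
    obtain j where u: "u = U * j" using \<open>U dvd u\<close> by (elim dvdE)
    show ?thesis unfolding u
    proof (induction j)
      case (Suc j)
      have "(g ^ (U * Suc j) * y) mod N = (g ^ U * (g ^ (U * j) * y)) mod N"
        by (simp only: mult_Suc_right power_add mult.assoc)
      also have "\<dots> = (g ^ U * ((g ^ (U * j) * y) mod N)) mod N" by (rule mod_mult_right_eq[symmetric])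
      also have "\<dots> \<in> setpow N A (g ^ U)" using Suc by (simp add: setpow_def)
      finally show ?case using stabiliser_gU by simp
    qed (use yA in simp)
  qed
qed

text \<open>g^phi(p^(n-k)) fixes y = p^k (x mod p^(n-k)), so phi(p^b) = U divides phi(p^(n-k)).\<close>
lemma b_le: "b \<le> n - k"
proof (rule ccontr)
  define e where "e = n - k"
  assume "\<not> b \<le> n - k"
  hence be: "e < b" and e1: "e \<ge> 1" unfolding e_def using kn n1 by auto
  have Ne: "N = p ^ e * p ^ k" unfolding e_def using kn n1 by (simp add: power_add[symmetric])
  define w where "w = x mod p ^ e"
  have yw: "y = w * p ^ k" using y_decomposition(1) unfolding w_def e_def by (simp add: mult.commute)
  have "coprime g (p ^ e)" using g_coprime_p by simp
  hence "(g ^ totient (p ^ e) * (w * p ^ k)) mod (p ^ e * p ^ k) = (w * p ^ k) mod (p ^ e * p ^ k)"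
    by (intro cong_one_fixes_multiples euler_theorem)
  hence "(g ^ totient (p ^ e) * y) mod N = y mod N" by (simp only: yw Ne[symmetric])
  hence "(g ^ totient (p ^ e) * y) mod N = y" by simp
  hence "(g ^ totient (p ^ e) * y) mod N \<in> A" using yA by simp
  hence "U dvd totient (p ^ e)" using orbit_exponent by blast
  hence "totient (p ^ b) dvd totient (p ^ e)" using ukb by simp
  hence "totient (p ^ b) \<le> totient (p ^ e)" using p_gt_1 by (intro dvd_imp_le) simp_all
  moreover have "p ^ (e - 1) * (p - 1) < p ^ (b - 1) * (p - 1)"
    using be e1 p_gt_1 by (simp add: power_strict_increasing_iff)
  ultimately show False using totient_prime_power[OF p] e1 be by simp
qed

lemma stabiliser_char:
  assumes m: "coprime m N"
  shows "(m * y) mod N \<in> A \<longleftrightarrow> [m = 1] (mod p ^ b)"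
proof -
  obtain u where u: "[m = g ^ u] (mod N)" using residue_primroot_power_cong[OF N_gt_1 g m] by blast
  have bn: "b \<le> n" using b_le by simp
  hence "[m = g ^ u] (mod p ^ b)" using cong_dvd_modulus_nat[OF u] by (simp add: le_imp_power_dvd)
  hence "[m = 1] (mod p ^ b) \<longleftrightarrow> [g ^ u = 1] (mod p ^ b)" by (metis cong_sym cong_trans)
  also have "\<dots> \<longleftrightarrow> U dvd u" using residue_primroot_power_cong_one[OF p bn g] ukb by simp
  also have "\<dots> \<longleftrightarrow> (g ^ u * y) mod N \<in> A" by (rule orbit_exponent[symmetric])
  also have "(g ^ u * y) mod N = (m * y) mod N" using cong_scalar_right[OF u, of y] by (simp add: cong_def)
  finally show ?thesis by simp
qed

text \<open>b = 0 would make A the whole layer of valuation k, of size phi(p^n) / p^k, which is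
  not a power of p because p - 1 > 1.\<close>
lemma b_pos: "b \<ge> 1"
proof (rule ccontr)
  assume "\<not> b \<ge> 1"
  hence "b = 0" by simp
  hence "[m = 1] (mod p ^ b)" for m by simp
  hence "{m. m < N \<and> coprime m N \<and> (m * y) mod N \<in> A} = {m. m < N \<and> coprime m N}"
    using stabiliser_char by blast
  moreover have "{w\<in>A. multiplicity p w = multiplicity p y} = A"
    using block_constant_valuation[OF up p cp A zero_notin_A _ yA] by blast
  ultimately have "card A * p ^ k = totient N"
    using stabiliser_card[OF up p A zero_notin_A yA] card_units_below[OF N_gt_1] valuation_y by simp
  also have "\<dots> = p ^ (n - 1) * (p - 1)" using totient_prime_power[OF p] n1 by simp
  finally have eq: "card A * p ^ k = p ^ (n - 1) * (p - 1)" .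
  obtain E where E: "card A = p ^ E" using cp A unfolding cond_p_def by blast
  have "(p - 1) dvd p ^ (E + k)" using eq E by (metis dvd_triv_right power_add)
  moreover have "coprime (p - 1) (p ^ (E + k))" using coprime_Suc_right_nat[of "p - 1"] p_gt_1 by simp
  ultimately have "is_unit (p - 1)" using coprime_common_divisor[of "p - 1" "p ^ (E + k)" "p - 1"] by simp
  hence "p = 2" using p_gt_1 by simp
  thus False using odd by simp
qed

text \<open>Every element of A is a unit multiple of y, since all of A has valuation k.\<close>
lemma block_as_orbit: "A = {(m * y) mod N | m. coprime m N \<and> [m = 1] (mod p ^ b)}"
proof (intro equalityI subsetI)
  fix a assume a: "a \<in> A"
  have "0 < a" "a < N" using a zero_notin_A unital_partition_block(2)[OF up A] by (auto intro: Nat.gr0I)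
  moreover have "0 < y" "y < N" using y_nonzero p_gt_1 by auto
  moreover have "multiplicity p a = multiplicity p y"
    by (rule block_constant_valuation[OF up p cp A zero_notin_A a yA])
  ultimately have "card {m. m < N \<and> coprime m N \<and> (m * y) mod N = a} > 0"
    using unit_fibre_card[OF p] p_gt_1 by simp
  then obtain m where "coprime m N" "(m * y) mod N = a" by (auto simp: card_gt_0_iff)
  thus "a \<in> {(m * y) mod N | m. coprime m N \<and> [m = 1] (mod p ^ b)}"
    using stabiliser_char a by blast
qed (use stabiliser_char in blast)

lemma image_of_block:
  "setpow N A (upow N \<alpha> i) = {(x * (p ^ k * (upow N \<alpha> i + s * p ^ b))) mod N | s. s < p ^ (n - k - b)}"
proof -
  define c where "c = upow N \<alpha> i"
  have "upow N \<alpha> i = g ^ nat (i mod int (totient N)) mod N"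
    by (rule upow_eq_power_mod) (use p_gt_1 in simp)
  moreover have "coprime (g ^ nat (i mod int (totient N))) p" using g_coprime_p by simp
  moreover have "p dvd N" using n1 by simp
  ultimately have c_coprime_p: "coprime c p" unfolding c_def using coprime_prime_mod[OF p] by simp
  have "setpow N A c = {(c * ((m * y) mod N)) mod N | m. coprime m N \<and> [m = 1] (mod p ^ b)}"
    by (subst block_as_orbit) (auto simp: setpow_def)
  also have "\<dots> = {(c * (m * (p ^ k * x))) mod N | m. coprime m N \<and> [m = 1] (mod p ^ b)}"
    by (simp add: mod_mult_right_eq)
  also have "\<dots> = {(x * (p ^ k * (c + s * p ^ b))) mod N | s. s < p ^ (n - k - b)}"
    using b_le kn n1 by (intro unit_coset_image[OF p b_pos _ c_coprime_p]) simp
  finally show ?thesis unfolding c_def .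
qed

end

theorem mainTheorem12:
  fixes p n k b :: nat and P :: "nat set set" and A :: "nat set" and x :: nat
    and \<alpha> i :: int
  assumes "prime p" and "odd p" and "n \<ge> 1"
    and "unital_partition (p ^ n) P" and "cond_p p P"
    and "k \<le> n - 1"
    and "A \<in> Pk p n P k"
    and "x \<in> gens (p ^ n)"
    and "(p ^ k * x) mod (p ^ n) \<in> A"
    and "residue_primroot (p ^ n) (nat (\<alpha> mod int (p ^ n)))"
    and "uk (p ^ n) \<alpha> ((p ^ k * x) mod (p ^ n)) A = totient (p ^ b)"
  shows "setpow (p ^ n) A (upow (p ^ n) \<alpha> i) =
    {(x * (p ^ k * (upow (p ^ n) \<alpha> i + s * p ^ b))) mod (p ^ n) | s. s < p ^ (n - k - b)}"
proof -
  have "A \<in> P" using assms(7) by (simp add: Pk_def)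
  then interpret level_block p n k b P A x \<alpha>
    using assms by unfold_locales
  show ?thesis by (rule image_of_block)
qed

end
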